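(* Consider an MLP with a single hidden layer of width $d_h\ge 2$, input dimension $d_i$ and output dimension $d_o$, with weight space $\mathcal{W}=\mathbb{R}^{d_h\times d_i}\oplus\mathbb{R}^{d_h}\oplus\mathbb{R}^{d_o\times d_h}\oplus\mathbb{R}^{d_o}$ (weights $\boldsymbol{\omega}=(\mathbf{W}_1,\mathbf{b}_1,\mathbf{W}_2,\mathbf{b}_2)$) equipped with the Euclidean norm, and let $G=S_{d_h}$ act on $\mathcal{W}$ by $\tau\cdot(\mathbf{W}_1,\mathbf{b}_1,\mathbf{W}_2,\mathbf{b}_2)=(\mathbf{P}_\tau^\top\mathbf{W}_1,\mathbf{P}_\tau^\top\mathbf{b}_1,\mathbf{W}_2\mathbf{P}_\tau,\mathbf{b}_2)$, where $\mathbf{P}_\tau$ is the permutation matrix of $\tau$. Then for every $\boldsymbol{\omega}\in\mathcal{W}$ there exists a non-identity $g\in G$ such that $$\lVert\boldsymbol{\omega}-g\cdot\boldsymbol{\omega}\rVert_2=\mathcal{O}\!\left(\frac{d_i+d_o}{\log(d_h)}\lVert\boldsymbol{\omega}\rVert_2\right),$$ where the implied constant is independent of $\boldsymbol{\omega}$, $d_i$, $d_o$, $d_h$. *)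

theory Defs
  imports Complex_Main "HOL-Combinatorics.Permutations"
begin

text \<open>Matrices are functions
  nat => nat => real (row index first), vectors nat => real; only the entries
  inside the index ranges given by the dimensions d_i, d_h, d_o are meaningful.\<close>
type_synonym weights = "(nat \<Rightarrow> nat \<Rightarrow> real) \<times> (nat \<Rightarrow> real) \<times> (nat \<Rightarrow> nat \<Rightarrow> real) \<times> (nat \<Rightarrow> real)"

definition perm_mat :: "(nat \<Rightarrow> nat) \<Rightarrow> nat \<Rightarrow> nat \<Rightarrow> real" where
  "perm_mat \<tau> i j = (if i = \<tau> j then 1 else 0)"

text \<open>Action tau . (W1,b1,W2,b2) = (P^T W1, P^T b1, W2 P, b2), with matrix products
  over the hidden index range {..<dh}.\<close>
definition perm_act :: "nat \<Rightarrow> (nat \<Rightarrow> nat) \<Rightarrow> weights \<Rightarrow> weights" where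
  "perm_act dh \<tau> w = (case w of (W1, b1, W2, b2) \<Rightarrow>
     ((\<lambda>i k. \<Sum>j<dh. perm_mat \<tau> j i * W1 j k),
      (\<lambda>i. \<Sum>j<dh. perm_mat \<tau> j i * b1 j),
      (\<lambda>r j. \<Sum>i<dh. W2 r i * perm_mat \<tau> i j),
      b2))"

definition wdiff :: "weights \<Rightarrow> weights \<Rightarrow> weights" where
  "wdiff v w = (case v of (W1, b1, W2, b2) \<Rightarrow> case w of (V1, c1, V2, c2) \<Rightarrow>
     ((\<lambda>i k. W1 i k - V1 i k), (\<lambda>i. b1 i - c1 i), (\<lambda>r j. W2 r j - V2 r j), (\<lambda>r. b2 r - c2 r)))"

definition wnorm :: "nat \<Rightarrow> nat \<Rightarrow> nat \<Rightarrow> weights \<Rightarrow> real" where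
  "wnorm din dh dout w = (case w of (W1, b1, W2, b2) \<Rightarrow>
     sqrt ((\<Sum>i<dh. \<Sum>k<din. (W1 i k)\<^sup>2) + (\<Sum>i<dh. (b1 i)\<^sup>2)
         + (\<Sum>r<dout. \<Sum>j<dh. (W2 r j)\<^sup>2) + (\<Sum>r<dout. (b2 r)\<^sup>2)))"

end

theory Submission
  imports Defs
begin

text \<open>Transposing two hidden neurons a and b changes \<omega> by a vector whose squared norm is
  twice the squared distance between the weight vectors of a and b, hence at most
  4 (|a|^2 + |b|^2). For the two neurons of smallest norm this is at most 8 |\<omega>|^2 / d_h, so
  some transposition moves \<omega> by O(|\<omega>| / sqrt d_h). Since ln d_h \<le> 2 sqrt d_h, this is
  stronger than the claimed bound.\<close>

definition neuron_sqnorm :: "nat \<Rightarrow> nat \<Rightarrow> weights \<Rightarrow> nat \<Rightarrow> real" where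
  "neuron_sqnorm din dout w i = (case w of (W1, b1, W2, _) \<Rightarrow>
     (\<Sum>k<din. (W1 i k)\<^sup>2) + (b1 i)\<^sup>2 + (\<Sum>r<dout. (W2 r i)\<^sup>2))"

definition neuron_sqdist :: "nat \<Rightarrow> nat \<Rightarrow> weights \<Rightarrow> nat \<Rightarrow> nat \<Rightarrow> real" where
  "neuron_sqdist din dout w i j = (case w of (W1, b1, W2, _) \<Rightarrow>
     (\<Sum>k<din. (W1 i k - W1 j k)\<^sup>2) + (b1 i - b1 j)\<^sup>2 + (\<Sum>r<dout. (W2 r i - W2 r j)\<^sup>2))"

lemma wnorm_nonneg: "0 \<le> wnorm din dh dout w"
  by (simp add: wnorm_def sum_nonneg add_nonneg_nonneg split: prod.split)

lemma sum_perm_mat_mult: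
  assumes "\<tau> permutes {..<n}" "i < n"
  shows "(\<Sum>j<n. perm_mat \<tau> j i * f j) = f (\<tau> i)"
proof -
  have "\<tau> i < n" using assms permutes_in_image by fastforce
  have "(\<Sum>j<n. perm_mat \<tau> j i * f j) = (\<Sum>j<n. if j = \<tau> i then f j else 0)"
    by (rule sum.cong) (auto simp: perm_mat_def)
  then show ?thesis using \<open>\<tau> i < n\<close> by simp
qed

lemma sum_mult_perm_mat:
  assumes "\<tau> permutes {..<n}" "i < n"
  shows "(\<Sum>j<n. f j * perm_mat \<tau> j i) = f (\<tau> i)"
  using sum_perm_mat_mult[OF assms, of f] by (simp add: mult.commute)

lemma sum_neuron_sqnorm_le_wnorm:
  "(\<Sum>i<dh. neuron_sqnorm din dout w i) \<le> (wnorm din dh dout w)\<^sup>2"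
proof -
  obtain W1 b1 W2 b2 where w: "w = (W1, b1, W2, b2)" by (cases w) auto
  have "0 \<le> (\<Sum>i<dh. \<Sum>k<din. (W1 i k)\<^sup>2) + (\<Sum>i<dh. (b1 i)\<^sup>2) +
       (\<Sum>r<dout. \<Sum>j<dh. (W2 r j)\<^sup>2) + (\<Sum>r<dout. (b2 r)\<^sup>2)"
    by (intro add_nonneg_nonneg sum_nonneg) auto
  then have "(wnorm din dh dout w)\<^sup>2
      = (\<Sum>i<dh. neuron_sqnorm din dout w i) + (\<Sum>r<dout. (b2 r)\<^sup>2)"
    unfolding w wnorm_def neuron_sqnorm_def
    by (simp add: sum.distrib sum.swap[of _ "{..<dout}"])
  then show ?thesis by (simp add: sum_nonneg)
qed

lemma wnorm_wdiff_perm_act_sq: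
  assumes \<tau>: "\<tau> permutes {..<dh}"
  shows "(wnorm din dh dout (wdiff w (perm_act dh \<tau> w)))\<^sup>2
    = (\<Sum>i<dh. neuron_sqdist din dout w i (\<tau> i))"
proof -
  obtain W1 b1 W2 b2 where w: "w = (W1, b1, W2, b2)" by (cases w) auto
  have W1: "(\<Sum>i<dh. \<Sum>k<din. (W1 i k - (\<Sum>j<dh. perm_mat \<tau> j i * W1 j k))\<^sup>2)
     = (\<Sum>i<dh. \<Sum>k<din. (W1 i k - W1 (\<tau> i) k)\<^sup>2)"
    by (rule sum.cong) (simp_all add: sum_perm_mat_mult[OF \<tau>])
  have b1: "(\<Sum>i<dh. (b1 i - (\<Sum>j<dh. perm_mat \<tau> j i * b1 j))\<^sup>2)
     = (\<Sum>i<dh. (b1 i - b1 (\<tau> i))\<^sup>2)"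
    by (rule sum.cong) (simp_all add: sum_perm_mat_mult[OF \<tau>])
  have W2: "(\<Sum>r<dout. \<Sum>j<dh. (W2 r j - (\<Sum>i<dh. W2 r i * perm_mat \<tau> i j))\<^sup>2)
     = (\<Sum>i<dh. \<Sum>r<dout. (W2 r i - W2 r (\<tau> i))\<^sup>2)"
    by (subst sum.swap, rule sum.cong) (simp_all add: sum_mult_perm_mat[OF \<tau>])
  have "0 \<le> (\<Sum>i<dh. \<Sum>k<din. (W1 i k - W1 (\<tau> i) k)\<^sup>2) + (\<Sum>i<dh. (b1 i - b1 (\<tau> i))\<^sup>2)
     + (\<Sum>i<dh. \<Sum>r<dout. (W2 r i - W2 r (\<tau> i))\<^sup>2)"
    by (intro add_nonneg_nonneg sum_nonneg) auto
  then show ?thesis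
    unfolding w wnorm_def wdiff_def perm_act_def neuron_sqdist_def
    by (simp add: W1 b1 W2 sum.distrib)
qed

lemma neuron_sqdist_self [simp]: "neuron_sqdist din dout w i i = 0"
  by (simp add: neuron_sqdist_def split: prod.split)

lemma neuron_sqdist_commute: "neuron_sqdist din dout w i j = neuron_sqdist din dout w j i"
  by (simp add: neuron_sqdist_def power2_commute split: prod.split)

lemma neuron_sqdist_le:
  "neuron_sqdist din dout w i j \<le> 2 * (neuron_sqnorm din dout w i + neuron_sqnorm din dout w j)"
proof -
  obtain W1 b1 W2 b2 where w: "w = (W1, b1, W2, b2)" by (cases w) auto
  have sq: "(x - y)\<^sup>2 \<le> 2 * x\<^sup>2 + 2 * y\<^sup>2" for x y :: real
    using sum_squares_ge_zero[of "x + y" 0] by (simp add: power2_eq_square algebra_simps)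
  have "(\<Sum>k<din. (W1 i k - W1 j k)\<^sup>2) \<le> (\<Sum>k<din. 2 * (W1 i k)\<^sup>2 + 2 * (W1 j k)\<^sup>2)"
    by (rule sum_mono) (rule sq)
  moreover have "(\<Sum>r<dout. (W2 r i - W2 r j)\<^sup>2) \<le> (\<Sum>r<dout. 2 * (W2 r i)\<^sup>2 + 2 * (W2 r j)\<^sup>2)"
    by (rule sum_mono) (rule sq)
  moreover have "(b1 i - b1 j)\<^sup>2 \<le> 2 * (b1 i)\<^sup>2 + 2 * (b1 j)\<^sup>2" by (rule sq)
  ultimately show ?thesis unfolding w neuron_sqdist_def neuron_sqnorm_def
    by (simp add: sum.distrib sum_distrib_left[symmetric] algebra_simps)
qed

lemma sum_transpose_apply:
  assumes "finite A" "a \<in> A" "b \<in> A" "a \<noteq> b" "\<And>i. g i i = 0"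
  shows "(\<Sum>i\<in>A. g i (transpose a b i)) = g a b + g b a"
proof -
  have "(\<Sum>i\<in>A. g i (transpose a b i)) = (\<Sum>i\<in>{a, b}. g i (transpose a b i))"
    using assms by (intro sum.mono_neutral_right) auto
  then show ?thesis using \<open>a \<noteq> b\<close> by simp
qed

lemma exists_two_below_average:
  fixes f :: "'a \<Rightarrow> real"
  assumes "finite A" "card A \<ge> 2"
  obtains a b where "a \<in> A" "b \<in> A" "a \<noteq> b" "real (card A) * (f a + f b) \<le> 2 * sum f A"
proof -
  have "A \<noteq> {}" using assms by auto
  obtain a where a: "a \<in> A" "\<And>i. i \<in> A \<Longrightarrow> f a \<le> f i"
    using arg_min_if_finite[OF \<open>finite A\<close> \<open>A \<noteq> {}\<close>, of f] by (metis not_le)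
  have "card (A - {a}) \<ge> 1" using assms a(1) by simp
  then have "A - {a} \<noteq> {}" by (metis card.empty not_one_le_zero)
  then obtain b where b: "b \<in> A - {a}" "\<And>i. i \<in> A - {a} \<Longrightarrow> f b \<le> f i"
    using arg_min_if_finite[of "A - {a}" f] \<open>finite A\<close> by (metis finite_Diff not_le)
  have "real (card (A - {a})) * f b \<le> sum f (A - {a})"
    by (rule sum_bounded_below) (use b in auto)
  then have "f a + (real (card A) - 1) * f b \<le> sum f A"
    using a(1) assms by (simp add: sum.remove of_nat_diff card_Diff_singleton)
  moreover have "(real (card A) - 2) * f a \<le> (real (card A) - 2) * f b"
    using a b assms by (intro mult_left_mono) auto
  ultimately have "real (card A) * (f a + f b) \<le> 2 * sum f A"
    by (simp add: algebra_simps)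
  then show ?thesis using that a(1) b(1) by blast
qed

lemma exists_transposition_wnorm_le:
  assumes "dh \<ge> 2"
  obtains \<tau> where "\<tau> permutes {..<dh}" "\<tau> \<noteq> id"
    "wnorm din dh dout (wdiff w (perm_act dh \<tau> w)) \<le> sqrt (8 / real dh) * wnorm din dh dout w"
proof -
  let ?n = "neuron_sqnorm din dout w" and ?d = "neuron_sqdist din dout w"
  obtain a b where ab: "a < dh" "b < dh" "a \<noteq> b" "real dh * (?n a + ?n b) \<le> 2 * sum ?n {..<dh}"
    using exists_two_below_average[of "{..<dh}" ?n] assms by auto
  define \<tau> where "\<tau> = transpose a b"
  have \<tau>: "\<tau> permutes {..<dh}" unfolding \<tau>_def using ab by (intro permutes_swap_id) auto
  have "\<tau> \<noteq> id" unfolding \<tau>_def using ab(3) by (metis id_apply transpose_apply_first)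
  have "(wnorm din dh dout (wdiff w (perm_act dh \<tau> w)))\<^sup>2 = (\<Sum>i<dh. ?d i (\<tau> i))"
    by (rule wnorm_wdiff_perm_act_sq[OF \<tau>])
  also have "\<dots> = 2 * ?d a b"
    using ab unfolding \<tau>_def by (simp add: sum_transpose_apply neuron_sqdist_commute[of _ _ _ b])
  also have "\<dots> \<le> 4 * (?n a + ?n b)" using neuron_sqdist_le[of din dout w a b] by simp
  also have "\<dots> \<le> 8 / real dh * (wnorm din dh dout w)\<^sup>2"
    using ab(4) sum_neuron_sqnorm_le_wnorm[of din dout w dh] assms by (simp add: field_simps)
  finally have "wnorm din dh dout (wdiff w (perm_act dh \<tau> w)) \<le> sqrt (8 / real dh * (wnorm din dh dout w)\<^sup>2)"
    using wnorm_nonneg real_le_rsqrt by blast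
  also have "\<dots> = sqrt (8 / real dh) * wnorm din dh dout w"
    by (simp only: real_sqrt_mult real_sqrt_abs abs_of_nonneg[OF wnorm_nonneg])
  finally show ?thesis using that \<tau> \<open>\<tau> \<noteq> id\<close> by blast
qed

lemma ln_le_two_sqrt:
  assumes "0 < x"
  shows "ln x \<le> 2 * sqrt x"
proof -
  have "ln x = 2 * ln (sqrt x)" using assms by (simp add: ln_sqrt)
  also have "\<dots> \<le> 2 * (sqrt x - 1)" using assms by (intro mult_left_mono ln_le_minus_one) auto
  finally show ?thesis by simp
qed

lemma sqrt_8_div_le:
  assumes "n \<ge> 2" "m \<ge> 2"
  shows "sqrt (8 / real n) \<le> 3 * (real m / ln (real n))"
proof -
  have "sqrt 8 \<le> (3::real)" by (rule real_le_lsqrt) auto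
  have "sqrt (8 / real n) * ln (real n) \<le> sqrt (8 / real n) * (2 * sqrt (real n))"
    using ln_le_two_sqrt[of "real n"] assms by (intro mult_left_mono) auto
  also have "\<dots> = 2 * sqrt 8" using assms by (simp add: real_sqrt_divide)
  also have "\<dots> \<le> 3 * real m" using \<open>sqrt 8 \<le> 3\<close> assms by simp
  finally show ?thesis using assms by (simp add: field_simps)
qed

theorem theorem3p1:
  "\<exists>C::real. \<forall>din dh dout::nat. \<forall>w::weights.
     din \<ge> 1 \<longrightarrow> dout \<ge> 1 \<longrightarrow> dh \<ge> 2 \<longrightarrow>
     (\<exists>\<tau>. \<tau> permutes {..<dh} \<and> \<tau> \<noteq> id \<and>
        wnorm din dh dout (wdiff w (perm_act dh \<tau> w))
          \<le> C * (real (din + dout) / ln (real dh)) * wnorm din dh dout w)"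
proof (intro exI[of _ 3] allI impI)
  fix din dh dout :: nat and w :: weights
  assume "din \<ge> 1" "dout \<ge> 1" "dh \<ge> 2"
  then obtain \<tau> where \<tau>: "\<tau> permutes {..<dh}" "\<tau> \<noteq> id"
    and moved: "wnorm din dh dout (wdiff w (perm_act dh \<tau> w)) \<le> sqrt (8 / real dh) * wnorm din dh dout w"
    using exists_transposition_wnorm_le by metis
  have "sqrt (8 / real dh) * wnorm din dh dout w
      \<le> 3 * (real (din + dout) / ln (real dh)) * wnorm din dh dout w"
    using sqrt_8_div_le[of dh "din + dout"] \<open>din \<ge> 1\<close> \<open>dout \<ge> 1\<close> \<open>dh \<ge> 2\<close>
    by (intro mult_right_mono wnorm_nonneg) auto
  then show "\<exists>\<tau>. \<tau> permutes {..<dh} \<and> \<tau> \<noteq> id \<and>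
      wnorm din dh dout (wdiff w (perm_act dh \<tau> w))
        \<le> 3 * (real (din + dout) / ln (real dh)) * wnorm din dh dout w"
    using \<tau> moved by auto
qed

end
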